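(* Let $G=(V,E)$ be an undirected graph with $|V|=p$ and $\sigma$ an ordering of $V$. If the ordered graph $G_\sigma$ satisfies Property-A and Property-B, then $G$ is a Generalized Bartlett graph and $\sigma$ is a Generalized Bartlett ordering for $G$.
   Context: Ordered graph: $G_\sigma$ has vertices $\{1,\dots,p\}$ and edges $E_\sigma=\{(i,j):(\sigma^{-1}(i),\sigma^{-1}(j))\in E\}$. For $\Omega\in\mathbb{P}_{G_\sigma}$ (symmetric positive definite, $\Omega_{ij}=0$ for $i\ne j$, $(i,j)\notin E_\sigma$) write $\Omega=LDL^T$ (modified Cholesky: $L$ unit lower triangular, $D=\mathrm{diag}(D_1,\dots,D_p)$, $D_i>0$), and set $\widetilde D_1=D_1$, $\widetilde D_k=D_k/D_{k-1}$ ($k\ge2$). The entries $L_I=\{L_{ij}:i>j,(i,j)\in E_\sigma\}$ are independent parameters. For $i>j$ with $(i,j)\notin E_\sigma$, $\Omega_{ij}=0$ gives $L_{ij}=-\sum_{k=1}^{j-1}L_{ik}L_{jk}\prod_{l=k+1}^{j}\widetilde D_l^{-1}$; substituting recursively, each such $L_{ij}$ is a polynomial (its expansion, with like terms collected) in the entries of $L_I$ and $\widetilde D_1^{-1},\dots,\widetilde D_p^{-1}$, each term of the form $\pm\prod_{(r,s)}L_{rs}^{c_{rs}}\prod_k\widetilde D_k^{d_k}$ with $c_{rs}\ge0$, $d_k\le0$ integers. $G_\sigma$ has Property-A if for every $i>j$ with $(i,j)\notin E_\sigma$ every exponent $c_{rs}$ in the expansion of $L_{ij}$ lies in $\{0,1\}$;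 it has Property-B if every exponent $d_k$ in the expansion of every such $L_{ij}$ lies in $\{0,-1\}$. Triangulation: $E^\sigma_0=E$, and for $i=1,\dots,p-2$, $E^\sigma_i=E^\sigma_{i-1}\cup\{\{u,v\}:u\ne v,\sigma(u)>i,\sigma(v)>i,\{u,\sigma^{-1}(i)\},\{v,\sigma^{-1}(i)\}\in E^\sigma_{i-1}\}$; $D^\sigma(E)=E^\sigma_{p-2}$. $\sigma$ is a Generalized Bartlett ordering of $G$ if there are no $u,v,w$ with $\{u,v\},\{v,w\},\{u,w\}\notin E$ but all in $D^\sigma(E)$; $G$ is Generalized Bartlett if such an ordering exists. *)

theory Defs
  imports Main "HOL-Library.Poly_Mapping"
begin

definition is_graph :: "'a set \<Rightarrow> 'a set set \<Rightarrow> bool" where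
  "is_graph V E \<longleftrightarrow> finite V \<and> (\<forall>e\<in>E. \<exists>u v. e = {u, v} \<and> u \<noteq> v \<and> u \<in> V \<and> v \<in> V)"

definition is_ordering :: "'a set \<Rightarrow> ('a \<Rightarrow> nat) \<Rightarrow> bool" where
  "is_ordering V \<sigma> \<longleftrightarrow> bij_betw \<sigma> V {1..card V}"

definition ordered_edges :: "'a set \<Rightarrow> 'a set set \<Rightarrow> ('a \<Rightarrow> nat) \<Rightarrow> (nat \<times> nat) set" where
  "ordered_edges V E \<sigma> =
     {(i, j). i \<in> {1..card V} \<and> j \<in> {1..card V} \<and> {inv_into V \<sigma> i, inv_into V \<sigma> j} \<in> E}"

(* Formal variables: LV r s stands for L_rs, DV k stands for tilde D_k^{-1} *)
datatype lvar = LV nat nat | DV nat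

type_synonym lpoly = "(lvar \<Rightarrow>\<^sub>0 nat) \<Rightarrow>\<^sub>0 int"

definition pvar :: "lvar \<Rightarrow> lpoly" where
  "pvar x = Poly_Mapping.single (Poly_Mapping.single x 1) 1"

function Lsym :: "(nat \<times> nat) set \<Rightarrow> nat \<Rightarrow> nat \<Rightarrow> lpoly" where
  "Lsym Es i j =
     (if (i, j) \<in> Es then pvar (LV i j)
      else - (\<Sum>k\<in>{1..<j}. Lsym Es i k * Lsym Es j k * (\<Prod>l\<in>{k+1..j}. pvar (DV l))))"
  by pat_completeness auto
termination by (relation "measure (\<lambda>(Es, i, j). j)") auto

definition property_A :: "nat \<Rightarrow> (nat \<times> nat) set \<Rightarrow> bool" where
  "property_A p Es \<longleftrightarrow>
     (\<forall>i j. 1 \<le> j \<and> j < i \<and> i \<le> p \<and> (i, j) \<notin> Es \<longrightarrow>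
        (\<forall>m \<in> Poly_Mapping.keys (Lsym Es i j). \<forall>r s. Poly_Mapping.lookup m (LV r s) \<le> 1))"

(* Property-B: every exponent d_k of tilde D_k lies in {0,-1}, i.e. the exponent
   of the variable tilde D_k^{-1} lies in {0,1} *)
definition property_B :: "nat \<Rightarrow> (nat \<times> nat) set \<Rightarrow> bool" where
  "property_B p Es \<longleftrightarrow>
     (\<forall>i j. 1 \<le> j \<and> j < i \<and> i \<le> p \<and> (i, j) \<notin> Es \<longrightarrow>
        (\<forall>m \<in> Poly_Mapping.keys (Lsym Es i j). \<forall>k. Poly_Mapping.lookup m (DV k) \<le> 1))"

fun tri :: "'a set \<Rightarrow> 'a set set \<Rightarrow> ('a \<Rightarrow> nat) \<Rightarrow> nat \<Rightarrow> 'a set set" where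
  "tri V E \<sigma> 0 = E"
| "tri V E \<sigma> (Suc i) = tri V E \<sigma> i \<union>
     {{u, v} | u v. u \<noteq> v \<and> u \<in> V \<and> v \<in> V \<and> \<sigma> u > Suc i \<and> \<sigma> v > Suc i \<and>
        {u, inv_into V \<sigma> (Suc i)} \<in> tri V E \<sigma> i \<and> {v, inv_into V \<sigma> (Suc i)} \<in> tri V E \<sigma> i}"

definition triangulation :: "'a set \<Rightarrow> 'a set set \<Rightarrow> ('a \<Rightarrow> nat) \<Rightarrow> 'a set set" where
  "triangulation V E \<sigma> = tri V E \<sigma> (card V - 2)"

definition GB_ordering :: "'a set \<Rightarrow> 'a set set \<Rightarrow> ('a \<Rightarrow> nat) \<Rightarrow> bool" where
  "GB_ordering V E \<sigma> \<longleftrightarrow> is_ordering V \<sigma> \<and>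
     \<not> (\<exists>u v w. {u, v} \<notin> E \<and> {v, w} \<notin> E \<and> {u, w} \<notin> E \<and>
        {u, v} \<in> triangulation V E \<sigma> \<and> {v, w} \<in> triangulation V E \<sigma> \<and>
        {u, w} \<in> triangulation V E \<sigma>)"

definition GB_graph :: "'a set \<Rightarrow> 'a set set \<Rightarrow> bool" where
  "GB_graph V E \<longleftrightarrow> (\<exists>\<sigma>. GB_ordering V E \<sigma>)"

end

theory Submission
  imports Defs
begin

text \<open>Weight each monomial with the sign (-1)^d, d its total degree in the L-variables.
  Every coefficient of a symbolic entry L_ij carries the opposite sign, so the recursion defining
  L_ij never cancels: each monomial of a summand, and each sum of monomials of the factors of a
  product, survives.  Hence every monomial of a non-edge L_ij contains D_j^{-1} (from the product
  over l = k+1..j), every fill-in edge of the triangulation has a nonzero entry, and a triangle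
  of non-edges z < y < x whose two edges at z are fill-ins yields in L_xy the monomial
  m1 m2 D_{z+1}^{-1}...D_y^{-1}, with m1 from L_xz and m2 from L_yz, in which D_z^{-1} occurs
  twice, against Property-B.\<close>

definition L_degree :: "(lvar \<Rightarrow>\<^sub>0 nat) \<Rightarrow> nat" where
  "L_degree m =
     (\<Sum>x\<in>Poly_Mapping.keys m. case x of LV _ _ \<Rightarrow> Poly_Mapping.lookup m x | DV _ \<Rightarrow> 0)"

lemma L_degree_eq_sum_superset:
  assumes "finite S" "Poly_Mapping.keys m \<subseteq> S"
  shows "L_degree m = (\<Sum>x\<in>S. case x of LV _ _ \<Rightarrow> Poly_Mapping.lookup m x | DV _ \<Rightarrow> 0)"
  unfolding L_degree_def
  by (rule sum.mono_neutral_left) (use assms in \<open>auto simp: in_keys_iff split: lvar.split\<close>)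

lemma L_degree_add: "L_degree (a + b) = L_degree a + L_degree b"
proof -
  let ?S = "Poly_Mapping.keys a \<union> Poly_Mapping.keys b"
  have "L_degree (a + b) = (\<Sum>x\<in>?S. case x of LV _ _ \<Rightarrow> Poly_Mapping.lookup (a + b) x | DV _ \<Rightarrow> 0)"
    by (rule L_degree_eq_sum_superset) (simp_all add: keys_add)
  also have "\<dots> = (\<Sum>x\<in>?S. (case x of LV _ _ \<Rightarrow> Poly_Mapping.lookup a x | DV _ \<Rightarrow> 0)
                          + (case x of LV _ _ \<Rightarrow> Poly_Mapping.lookup b x | DV _ \<Rightarrow> 0))"
    by (rule sum.cong) (auto simp: lookup_add split: lvar.split)
  also have "\<dots> = L_degree a + L_degree b"
    by (simp add: sum.distrib L_degree_eq_sum_superset[of ?S])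
  finally show ?thesis .
qed

definition L_sign :: "(lvar \<Rightarrow>\<^sub>0 nat) \<Rightarrow> int" where
  "L_sign m = (-1) ^ L_degree m"

lemma L_sign_add: "L_sign (a + b) = L_sign a * L_sign b"
  by (simp add: L_sign_def L_degree_add power_add)

lemma L_sign_nonzero: "L_sign m \<noteq> 0"
  by (simp add: L_sign_def)

definition sign_coherent :: "int \<Rightarrow> lpoly \<Rightarrow> bool" where
  "sign_coherent s P \<longleftrightarrow> (\<forall>m. 0 \<le> s * L_sign m * Poly_Mapping.lookup P m)"

lemma lookup_times_eq_sum_keys:
  "Poly_Mapping.lookup (f * g) k =
     (\<Sum>(a, b)\<in>Poly_Mapping.keys f \<times> Poly_Mapping.keys g.
        if k = a + b then Poly_Mapping.lookup f a * Poly_Mapping.lookup g b else 0)"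
proof -
  have "Poly_Mapping.lookup (f * g) k = prod_fun (Poly_Mapping.lookup f) (Poly_Mapping.lookup g) k"
    by (simp add: lookup_mult prod_fun_def)
  also have "\<dots> = (\<Sum>(a, b). Poly_Mapping.lookup f a * Poly_Mapping.lookup g b when k = a + b)"
    by (rule prod_fun_unfold_prod) auto
  also have "\<dots> = (\<Sum>(a, b)\<in>Poly_Mapping.keys f \<times> Poly_Mapping.keys g.
                    Poly_Mapping.lookup f a * Poly_Mapping.lookup g b when k = a + b)"
    by (rule Sum_any.expand_superset) (auto simp: in_keys_iff when_def split: if_splits)
  finally show ?thesis by (simp add: when_def)
qed

lemma signed_lookup_times:
  "s * t * L_sign k * Poly_Mapping.lookup (P * Q) k =
     (\<Sum>(a, b)\<in>Poly_Mapping.keys P \<times> Poly_Mapping.keys Q.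
        if k = a + b
        then (s * L_sign a * Poly_Mapping.lookup P a) * (t * L_sign b * Poly_Mapping.lookup Q b)
        else 0)"
  unfolding lookup_times_eq_sum_keys sum_distrib_left
  by (rule sum.cong) (auto simp: L_sign_add algebra_simps)

lemma sign_coherent_times:
  assumes "sign_coherent s P" "sign_coherent t Q"
  shows "sign_coherent (s * t) (P * Q)"
  using assms unfolding sign_coherent_def signed_lookup_times
  by (auto intro!: sum_nonneg mult_nonneg_nonneg)

lemma keys_times_sign_coherent:
  assumes "sign_coherent s P" "sign_coherent t Q" "s \<noteq> 0" "t \<noteq> 0"
    and "a \<in> Poly_Mapping.keys P" "b \<in> Poly_Mapping.keys Q"
  shows "a + b \<in> Poly_Mapping.keys (P * Q)"
proof -
  have pos: "0 < s * L_sign a * Poly_Mapping.lookup P a" "0 < t * L_sign b * Poly_Mapping.lookup Q b"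
    using assms L_sign_nonzero unfolding sign_coherent_def
    by (metis in_keys_iff less_le mult_eq_0_iff)+
  have "0 < s * t * L_sign (a + b) * Poly_Mapping.lookup (P * Q) (a + b)"
    unfolding signed_lookup_times
  proof (rule sum_pos2)
    show "(a, b) \<in> Poly_Mapping.keys P \<times> Poly_Mapping.keys Q"
      using assms by simp
  qed (use pos assms(1,2) in \<open>auto simp: sign_coherent_def intro: mult_nonneg_nonneg\<close>)
  then show ?thesis
    by (auto simp: in_keys_iff)
qed

lemma sign_coherent_sum:
  "(\<And>i. i \<in> A \<Longrightarrow> sign_coherent s (P i)) \<Longrightarrow> sign_coherent s (\<Sum>i\<in>A. P i)"
  unfolding sign_coherent_def lookup_sum sum_distrib_left
  by (auto intro: sum_nonneg)

lemma keys_sum_sign_coherent: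
  assumes "\<And>i. i \<in> A \<Longrightarrow> sign_coherent s (P i)" "finite A" "s \<noteq> 0"
    and "i \<in> A" "m \<in> Poly_Mapping.keys (P i)"
  shows "m \<in> Poly_Mapping.keys (\<Sum>i\<in>A. P i)"
proof -
  have "0 < s * L_sign m * Poly_Mapping.lookup (\<Sum>i\<in>A. P i) m"
    unfolding lookup_sum sum_distrib_left
  proof (rule sum_pos2[OF assms(2,4)])
    show "0 < s * L_sign m * Poly_Mapping.lookup (P i) m"
      using assms L_sign_nonzero unfolding sign_coherent_def
      by (metis in_keys_iff less_le mult_eq_0_iff)
  qed (use assms(1) in \<open>auto simp: sign_coherent_def\<close>)
  then show ?thesis
    by (auto simp: in_keys_iff)
qed

lemma sign_coherent_uminus: "sign_coherent s P \<Longrightarrow> sign_coherent (- s) (- P)"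
  unfolding sign_coherent_def by simp

lemma sign_coherent_pvar_LV: "sign_coherent (- 1) (pvar (LV i j))"
  unfolding sign_coherent_def pvar_def L_sign_def L_degree_def
  by (auto simp: lookup_single when_def)

definition D_monomial :: "nat set \<Rightarrow> (lvar \<Rightarrow>\<^sub>0 nat)" where
  "D_monomial A = (\<Sum>l\<in>A. Poly_Mapping.single (DV l) 1)"

lemma prod_pvar_DV:
  "finite A \<Longrightarrow> (\<Prod>l\<in>A. pvar (DV l)) = Poly_Mapping.single (D_monomial A) 1"
proof (induction A rule: finite_induct)
  case empty
  then show ?case
    by (simp add: D_monomial_def one_poly_mapping.abs_eq single.abs_eq when_def)
next
  case (insert x F)
  then show ?case
    by (simp add: D_monomial_def pvar_def mult_single add.commute)
qed

lemma L_degree_D_monomial: "L_degree (D_monomial A) = 0"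
proof -
  have "Poly_Mapping.keys (D_monomial A) \<subseteq> DV ` A"
    unfolding D_monomial_def using keys_sum by fastforce
  then show ?thesis
    unfolding L_degree_def by (auto intro!: sum.neutral)
qed

lemma lookup_D_monomial: "finite A \<Longrightarrow> c \<in> A \<Longrightarrow> Poly_Mapping.lookup (D_monomial A) (DV c) = 1"
  unfolding D_monomial_def lookup_sum by (simp add: lookup_single when_def)

lemma sign_coherent_prod_pvar_DV: "finite A \<Longrightarrow> sign_coherent 1 (\<Prod>l\<in>A. pvar (DV l))"
  unfolding sign_coherent_def prod_pvar_DV
  by (auto simp: lookup_single when_def L_sign_def L_degree_D_monomial)

lemma keys_prod_pvar_DV: "finite A \<Longrightarrow> Poly_Mapping.keys (\<Prod>l\<in>A. pvar (DV l)) = {D_monomial A}"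
  by (simp add: prod_pvar_DV)

lemma Lsym_edge: "(i, j) \<in> Es \<Longrightarrow> Lsym Es i j = pvar (LV i j)"
  by (subst Lsym.simps) (simp only: if_True simp_thms)

lemma Lsym_nonedge: "(i, j) \<notin> Es \<Longrightarrow> Lsym Es i j =
  - (\<Sum>k\<in>{1..<j}. Lsym Es i k * Lsym Es j k * (\<Prod>l\<in>{k+1..j}. pvar (DV l)))"
  by (subst Lsym.simps) (simp only: if_False simp_thms)

declare Lsym.simps [simp del]

lemma sign_coherent_Lsym: "sign_coherent (- 1) (Lsym Es i j)"
proof (induction Es i j rule: Lsym.induct)
  case (1 Es i j)
  show ?case
  proof (cases "(i, j) \<in> Es")
    case True
    then show ?thesis by (simp add: Lsym_edge sign_coherent_pvar_LV)
  next
    case False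
    have "sign_coherent ((- 1) * (- 1) * 1)
            (\<Sum>k\<in>{1..<j}. Lsym Es i k * Lsym Es j k * (\<Prod>l\<in>{k+1..j}. pvar (DV l)))"
      using 1 False
      by (intro sign_coherent_sum sign_coherent_times sign_coherent_prod_pvar_DV) auto
    then show ?thesis
      unfolding Lsym_nonedge[OF False] using sign_coherent_uminus by fastforce
  qed
qed

lemma sign_coherent_Lsym_term:
  "sign_coherent 1 (Lsym Es i k * Lsym Es j k * (\<Prod>l\<in>{k+1..j}. pvar (DV l)))"
  using sign_coherent_times[OF sign_coherent_times[OF sign_coherent_Lsym sign_coherent_Lsym]
      sign_coherent_prod_pvar_DV[of "{k+1..j}"]]
  by simp

lemma keys_Lsym_nonedge:
  assumes "(i, j) \<notin> Es" "k \<in> {1..<j}"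
    and "m1 \<in> Poly_Mapping.keys (Lsym Es i k)" "m2 \<in> Poly_Mapping.keys (Lsym Es j k)"
  shows "m1 + m2 + D_monomial {k+1..j} \<in> Poly_Mapping.keys (Lsym Es i j)"
proof -
  have "m1 + m2 \<in> Poly_Mapping.keys (Lsym Es i k * Lsym Es j k)"
    by (rule keys_times_sign_coherent[OF sign_coherent_Lsym sign_coherent_Lsym _ _ assms(3,4)]) simp_all
  then have "m1 + m2 + D_monomial {k+1..j}
               \<in> Poly_Mapping.keys (Lsym Es i k * Lsym Es j k * (\<Prod>l\<in>{k+1..j}. pvar (DV l)))"
    by (intro keys_times_sign_coherent[OF sign_coherent_times[OF sign_coherent_Lsym sign_coherent_Lsym]
          sign_coherent_prod_pvar_DV]) (simp_all add: keys_prod_pvar_DV)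
  then show ?thesis
    unfolding Lsym_nonedge[OF assms(1)] keys_minus
    by (intro keys_sum_sign_coherent[where s = 1 and A = "{1..<j}" and i = k
          and P = "\<lambda>k. Lsym Es i k * Lsym Es j k * (\<Prod>l\<in>{k+1..j}. pvar (DV l))"]
          sign_coherent_Lsym_term) (use assms(2) in simp_all)
qed

lemma lookup_DV_keys_Lsym_nonedge:
  assumes "(i, j) \<notin> Es" "m \<in> Poly_Mapping.keys (Lsym Es i j)"
  shows "1 \<le> Poly_Mapping.lookup m (DV j)"
proof -
  have "m \<in> (\<Union>k\<in>{1..<j}.
              Poly_Mapping.keys (Lsym Es i k * Lsym Es j k * (\<Prod>l\<in>{k+1..j}. pvar (DV l))))"
    using assms(2) unfolding Lsym_nonedge[OF assms(1)] keys_minus by (rule subsetD[OF keys_sum])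
  then obtain k where k: "k \<in> {1..<j}"
    and "m \<in> Poly_Mapping.keys (Lsym Es i k * Lsym Es j k * (\<Prod>l\<in>{k+1..j}. pvar (DV l)))"
    by blast
  then obtain a where m: "m = a + D_monomial {k+1..j}"
    using keys_mult[of "Lsym Es i k * Lsym Es j k" "\<Prod>l\<in>{k+1..j}. pvar (DV l)"]
    by (auto simp: keys_prod_pvar_DV)
  have "Poly_Mapping.lookup (D_monomial {k+1..j}) (DV j) = 1"
    using k by (intro lookup_D_monomial) auto
  then show ?thesis
    by (simp add: m lookup_add)
qed

lemma obtain_sorted_triple:
  fixes f :: "'a \<Rightarrow> 'b::linorder"
  assumes "f u \<noteq> f v" "f v \<noteq> f w" "f u \<noteq> f w"
  obtains x y z where "{x, y, z} = {u, v, w}" "f z < f y" "f y < f x"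
  using assms by (metis insert_commute linorder_neqE)

locale ordered_graph =
  fixes V :: "'a set" and E :: "'a set set" and \<sigma> :: "'a \<Rightarrow> nat"
  assumes graph: "is_graph V E" and ordering: "is_ordering V \<sigma>"
begin

abbreviation "Es \<equiv> ordered_edges V E \<sigma>"

lemma sigma_bij: "bij_betw \<sigma> V {1..card V}"
  using ordering by (simp add: is_ordering_def)

lemma sigma_range: "u \<in> V \<Longrightarrow> \<sigma> u \<in> {1..card V}"
  using sigma_bij by (auto simp: bij_betw_def)

lemma sigma_inj: "u \<in> V \<Longrightarrow> v \<in> V \<Longrightarrow> \<sigma> u = \<sigma> v \<Longrightarrow> u = v"
  using sigma_bij by (auto simp: bij_betw_def inj_on_def)

lemma inv_into_sigma: "k \<in> {1..card V} \<Longrightarrow> inv_into V \<sigma> k \<in> V \<and> \<sigma> (inv_into V \<sigma> k) = k"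
  using sigma_bij by (metis bij_betw_def bij_betw_inv_into_left bij_betw_inv_into f_inv_into_f bij_betw_apply)

lemma ordered_edges_iff: "u \<in> V \<Longrightarrow> v \<in> V \<Longrightarrow> (\<sigma> u, \<sigma> v) \<in> Es \<longleftrightarrow> {u, v} \<in> E"
  using sigma_range sigma_bij by (auto simp: ordered_edges_def bij_betw_def inv_into_f_f)

lemma tri_edge_shape: "e \<in> tri V E \<sigma> t \<Longrightarrow> \<exists>x y. e = {x, y} \<and> x \<noteq> y \<and> x \<in> V \<and> y \<in> V"
  by (induction t arbitrary: e) (use graph in \<open>auto simp: is_graph_def\<close>)

lemma triangulation_edge_distinct:
  "{x, y} \<in> triangulation V E \<sigma> \<Longrightarrow> x \<noteq> y \<and> x \<in> V \<and> y \<in> V"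
  unfolding triangulation_def by (drule tri_edge_shape) (auto simp: doubleton_eq_iff)

lemma Lsym_tri_nonzero:
  "{u, v} \<in> tri V E \<sigma> t \<Longrightarrow> u \<in> V \<Longrightarrow> v \<in> V \<Longrightarrow> \<sigma> v < \<sigma> u \<Longrightarrow> Lsym Es (\<sigma> u) (\<sigma> v) \<noteq> 0"
proof (induction t arbitrary: u v)
  case 0
  then show ?case
    using ordered_edges_iff by (simp add: Lsym_edge pvar_def)
next
  case (Suc t)
  let ?w = "inv_into V \<sigma> (Suc t)"
  show ?case
  proof (cases "{u, v} \<in> tri V E \<sigma> t \<or> (\<sigma> u, \<sigma> v) \<in> Es")
    case True
    then show ?thesis
      using Suc by (auto simp: Lsym_edge pvar_def)
  next
    case False
    then have fill: "\<sigma> u > Suc t" "{u, ?w} \<in> tri V E \<sigma> t"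
        "\<sigma> v > Suc t" "{v, ?w} \<in> tri V E \<sigma> t"
      using Suc.prems(1) by (auto simp: doubleton_eq_iff)
    have "Suc t \<in> {1..card V}"
      using fill sigma_range[OF Suc.prems(2)] by auto
    then have w: "?w \<in> V" "\<sigma> ?w = Suc t"
      using inv_into_sigma by auto
    obtain m1 m2 where "m1 \<in> Poly_Mapping.keys (Lsym Es (\<sigma> u) (Suc t))"
        "m2 \<in> Poly_Mapping.keys (Lsym Es (\<sigma> v) (Suc t))"
      using Suc.IH[OF fill(2) Suc.prems(2) w(1)] Suc.IH[OF fill(4) Suc.prems(3) w(1)] w fill
      by fastforce
    from keys_Lsym_nonedge[OF _ _ this] False fill show ?thesis
      by fastforce
  qed
qed

lemma no_sorted_triangle:
  assumes "property_B (card V) Es"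
    and "x \<in> V" "y \<in> V" "z \<in> V" "\<sigma> z < \<sigma> y" "\<sigma> y < \<sigma> x"
    and "{x, y} \<notin> E" "{x, z} \<notin> E" "{y, z} \<notin> E"
    and "{x, z} \<in> triangulation V E \<sigma>" "{y, z} \<in> triangulation V E \<sigma>"
  shows False
proof -
  let ?a = "\<sigma> x" and ?b = "\<sigma> y" and ?c = "\<sigma> z"
  have nonedges: "(?a, ?b) \<notin> Es" "(?a, ?c) \<notin> Es" "(?b, ?c) \<notin> Es"
    using assms ordered_edges_iff by auto
  obtain m1 m2 where m1: "m1 \<in> Poly_Mapping.keys (Lsym Es ?a ?c)"
    and m2: "m2 \<in> Poly_Mapping.keys (Lsym Es ?b ?c)"
    using Lsym_tri_nonzero[OF assms(10)[unfolded triangulation_def]]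
      Lsym_tri_nonzero[OF assms(11)[unfolded triangulation_def]] assms(2-6)
    by fastforce
  have "?c \<in> {1..<?b}"
    using sigma_range[OF assms(4)] assms by auto
  then have "m1 + m2 + D_monomial {?c+1..?b} \<in> Poly_Mapping.keys (Lsym Es ?a ?b)"
    by (rule keys_Lsym_nonedge[OF nonedges(1) _ m1 m2])
  moreover have "2 \<le> Poly_Mapping.lookup (m1 + m2 + D_monomial {?c+1..?b}) (DV ?c)"
    using lookup_DV_keys_Lsym_nonedge[OF nonedges(2) m1]
      lookup_DV_keys_Lsym_nonedge[OF nonedges(3) m2]
    by (simp add: lookup_add)
  moreover have "1 \<le> ?b" "?b < ?a" "?a \<le> card V"
    using sigma_range assms by auto
  ultimately show False
    using assms(1) nonedges(1) unfolding property_B_def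
    by (metis numeral_le_one_iff semiring_norm(69) order_trans)
qed

lemma GB_ordering_if_property_B:
  assumes "property_B (card V) Es"
  shows "GB_ordering V E \<sigma>"
  unfolding GB_ordering_def
proof (intro conjI notI)
  show "is_ordering V \<sigma>" by (rule ordering)
  assume "\<exists>u v w. {u, v} \<notin> E \<and> {v, w} \<notin> E \<and> {u, w} \<notin> E \<and>
      {u, v} \<in> triangulation V E \<sigma> \<and> {v, w} \<in> triangulation V E \<sigma> \<and> {u, w} \<in> triangulation V E \<sigma>"
  then obtain u v w where uvw: "{u, v} \<notin> E" "{v, w} \<notin> E" "{u, w} \<notin> E"
      "{u, v} \<in> triangulation V E \<sigma>" "{v, w} \<in> triangulation V E \<sigma>" "{u, w} \<in> triangulation V E \<sigma>"
    by blast
  then have V: "u \<in> V" "v \<in> V" "w \<in> V" and "u \<noteq> v" "v \<noteq> w" "u \<noteq> w"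
    using triangulation_edge_distinct by blast+
  have triangle: "{a, b} \<notin> E \<and> {a, b} \<in> triangulation V E \<sigma>"
    if "a \<in> {u, v, w}" "b \<in> {u, v, w}" "a \<noteq> b" for a b
    using that uvw by (auto simp: insert_commute)
  have "\<sigma> u \<noteq> \<sigma> v" "\<sigma> v \<noteq> \<sigma> w" "\<sigma> u \<noteq> \<sigma> w"
    using sigma_inj V \<open>u \<noteq> v\<close> \<open>v \<noteq> w\<close> \<open>u \<noteq> w\<close> by blast+
  then obtain x y z where xyz: "{x, y, z} = {u, v, w}" "\<sigma> z < \<sigma> y" "\<sigma> y < \<sigma> x"
    by (rule obtain_sorted_triple)
  then have "x \<in> {u, v, w}" "y \<in> {u, v, w}" "z \<in> {u, v, w}" "x \<noteq> y" "x \<noteq> z" "y \<noteq> z"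
    by auto
  then show False
    using no_sorted_triangle[OF assms _ _ _ xyz(2,3)] triangle V by blast
qed

end

theorem theorem4:
  fixes V :: "'a set" and E :: "'a set set" and \<sigma> :: "'a \<Rightarrow> nat"
  assumes "is_graph V E"
    and "is_ordering V \<sigma>"
    and "property_A (card V) (ordered_edges V E \<sigma>)"
    and "property_B (card V) (ordered_edges V E \<sigma>)"
  shows "GB_graph V E \<and> GB_ordering V E \<sigma>"
proof -
  interpret ordered_graph V E \<sigma>
    using assms(1,2) by unfold_locales
  have "GB_ordering V E \<sigma>"
    using GB_ordering_if_property_B assms(4) .
  then show ?thesis
    unfolding GB_graph_def by blast
qed

end
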